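(* Let $I\subset\mathbb{N}$ be finite, let $G_1,G_2$ be groups, and for each $i\in I$ let $K_{1_i}\le G_1$ and $K_{2_i}\le G_2$. If $(G_1,(K_{1_i})_{i\in I})$ and $(G_2,(K_{2_i})_{i\in I})$ are subgroup geometry systems, then so is $(G_1\times G_2,(K_{1_i}\times K_{2_i})_{i\in I})$.
   Context: For a group $G$ with subgroups $(K_{\{i\}})_{i\in I}$, put $K_\tau=\bigcap_{i\in\tau}K_{\{i\}}$ for $\emptyset\ne\tau\subseteq I$ and $K_\emptyset=G$. $(G,(K_{\{i\}})_{i\in I})$ is a subgroup geometry system if: (A1) for all $\tau,\tau'\subseteq I$, $K_{\tau\cap\tau'}=\langle K_\tau,K_{\tau'}\rangle$; (A2) for every $\tau\subsetneq I$ and $i\in I\setminus\tau$, $K_\tau K_{\{i\}}=\bigcap_{j\in\tau}K_{\{j\}}K_{\{i\}}$; (A3) for every $i\in I$, $K_I\ne K_{I\setminus\{i\}}$. *)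

theory Defs
  imports "HOL-Algebra.Algebra"
begin

definition Kint :: "('a, 'b) monoid_scheme \<Rightarrow> ('i \<Rightarrow> 'a set) \<Rightarrow> 'i set \<Rightarrow> 'a set" where
  "Kint G K \<tau> = (if \<tau> = {} then carrier G else (\<Inter>i\<in>\<tau>. K i))"

definition subgroup_geometry_system ::
  "('a, 'b) monoid_scheme \<Rightarrow> 'i set \<Rightarrow> ('i \<Rightarrow> 'a set) \<Rightarrow> bool" where
  "subgroup_geometry_system G I K \<longleftrightarrow>
     group G \<and> (\<forall>i\<in>I. subgroup (K i) G) \<and>
     (\<comment> \<open>A1\<close> \<forall>\<tau> \<tau>'. \<tau> \<subseteq> I \<longrightarrow> \<tau>' \<subseteq> I \<longrightarrow>
        Kint G K (\<tau> \<inter> \<tau>') = generate G (Kint G K \<tau> \<union> Kint G K \<tau>')) \<and>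
     (\<comment> \<open>A2\<close> \<forall>\<tau> i. \<tau> \<subset> I \<longrightarrow> i \<in> I - \<tau> \<longrightarrow>
        Kint G K \<tau> <#>\<^bsub>G\<^esub> K i = Kint G (\<lambda>j. K j <#>\<^bsub>G\<^esub> K i) \<tau>) \<and>
     (\<comment> \<open>A3\<close> \<forall>i\<in>I. Kint G K I \<noteq> Kint G K (I - {i}))"

end

theory Submission
  imports Defs
begin

text \<open>Everything in the axioms of a subgroup geometry system on \<open>G\<^sub>1 \<times> G\<^sub>2\<close> is computed
componentwise: the intersections \<open>K\<^sub>\<tau>\<close>, products of subsets, and also the subgroup
generated by \<open>K\<^sub>\<tau> \<union> K\<^sub>\<tau>\<^sub>'\<close>, because a union of two products of subgroups lies between
the two coordinate axes and the full box over the unions, and both bounds generate the same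
subgroup. Axiom (A3) transfers because every \<open>K\<^sub>\<tau>\<close> is nonempty, so a product of them
determines its factors.\<close>

lemma subgroup_Kint:
  assumes "group G" "\<And>i. i \<in> I \<Longrightarrow> subgroup (K i) G" "\<tau> \<subseteq> I"
  shows "subgroup (Kint G K \<tau>) G"
  using assms group.subgroup_self group.subgroups_Inter[OF assms(1), of "K ` \<tau>"]
  by (auto simp: Kint_def)

lemma Kint_DirProd:
  "Kint (G \<times>\<times> H) (\<lambda>i. K i \<times> L i) \<tau> = Kint G K \<tau> \<times> Kint H L \<tau>"
  by (auto simp: Kint_def)

lemma set_mult_DirProd:
  "(A \<times> B) <#>\<^bsub>G \<times>\<times> H\<^esub> (C \<times> D) = (A <#>\<^bsub>G\<^esub> C) \<times> (B <#>\<^bsub>H\<^esub> D)"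
  unfolding set_mult_def by (auto simp: mult_DirProd'; blast)

lemma generate_DirProd_left_axis:
  assumes "group G" "group H" "S \<subseteq> carrier G"
  shows "generate (G \<times>\<times> H) (S \<times> {\<one>\<^bsub>H\<^esub>}) = generate G S \<times> {\<one>\<^bsub>H\<^esub>}"
proof -
  interpret group_hom G "G \<times>\<times> H" "\<lambda>x. (x, \<one>\<^bsub>H\<^esub>)"
    using assms by (intro group_hom.intro group_hom_axioms.intro DirProd_group)
      (auto simp: hom_def group.is_monoid)
  have axis: "\<And>A. A \<times> {\<one>\<^bsub>H\<^esub>} = (\<lambda>x. (x, \<one>\<^bsub>H\<^esub>)) ` A"
    by auto
  show ?thesis
    unfolding axis by (rule generate_img[OF assms(3)])
qed

lemma generate_DirProd_right_axis:
  assumes "group G" "group H" "T \<subseteq> carrier H"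
  shows "generate (G \<times>\<times> H) ({\<one>\<^bsub>G\<^esub>} \<times> T) = {\<one>\<^bsub>G\<^esub>} \<times> generate H T"
proof -
  interpret group_hom H "G \<times>\<times> H" "\<lambda>y. (\<one>\<^bsub>G\<^esub>, y)"
    using assms by (intro group_hom.intro group_hom_axioms.intro DirProd_group)
      (auto simp: hom_def group.is_monoid)
  have axis: "\<And>A. {\<one>\<^bsub>G\<^esub>} \<times> A = (\<lambda>y. (\<one>\<^bsub>G\<^esub>, y)) ` A"
    by auto
  show ?thesis
    unfolding axis by (rule generate_img[OF assms(3)])
qed

lemma generate_DirProd_between_axes_and_box:
  assumes G: "group G" and H: "group H"
    and carr: "S \<subseteq> carrier G" "T \<subseteq> carrier H"
    and axes: "S \<times> {\<one>\<^bsub>H\<^esub>} \<union> {\<one>\<^bsub>G\<^esub>} \<times> T \<subseteq> U" and box: "U \<subseteq> S \<times> T"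
  shows "generate (G \<times>\<times> H) U = generate G S \<times> generate H T"
proof
  interpret G: group G by fact
  interpret H: group H by fact
  interpret GH: group "G \<times>\<times> H" using DirProd_group[OF G H] .
  show "generate (G \<times>\<times> H) U \<subseteq> generate G S \<times> generate H T"
  proof (rule GH.generate_subgroup_incl)
    show "subgroup (generate G S \<times> generate H T) (G \<times>\<times> H)"
      by (intro DirProd_subgroups G H G.generate_is_subgroup H.generate_is_subgroup carr)
    have "S \<times> T \<subseteq> generate G S \<times> generate H T"
      by (auto intro: generate.incl)
    with box show "U \<subseteq> generate G S \<times> generate H T"
      by (rule order_trans)
  qed
  have "U \<subseteq> carrier (G \<times>\<times> H)"
    using box carr by force
  then have sub_U: "subgroup (generate (G \<times>\<times> H) U) (G \<times>\<times> H)"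
    by (rule GH.generate_is_subgroup)
  have left: "generate G S \<times> {\<one>\<^bsub>H\<^esub>} \<subseteq> generate (G \<times>\<times> H) U"
    unfolding generate_DirProd_left_axis[OF G H carr(1), symmetric]
    using axes by (intro GH.mono_generate) blast
  have right: "{\<one>\<^bsub>G\<^esub>} \<times> generate H T \<subseteq> generate (G \<times>\<times> H) U"
    unfolding generate_DirProd_right_axis[OF G H carr(2), symmetric]
    using axes by (intro GH.mono_generate) blast
  show "generate G S \<times> generate H T \<subseteq> generate (G \<times>\<times> H) U"
  proof clarify
    fix x y assume x: "x \<in> generate G S" and y: "y \<in> generate H T"
    then have "(x, y) = (x, \<one>\<^bsub>H\<^esub>) \<otimes>\<^bsub>G \<times>\<times> H\<^esub> (\<one>\<^bsub>G\<^esub>, y)"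
      using G.generate_in_carrier H.generate_in_carrier carr by simp
    also have "\<dots> \<in> generate (G \<times>\<times> H) U"
      using subgroup.m_closed[OF sub_U] left right x y by blast
    finally show "(x, y) \<in> generate (G \<times>\<times> H) U" .
  qed
qed

lemma generate_DirProd_Un_Times:
  assumes "group G" "group H"
    and A: "subgroup A G" and B: "subgroup B G" and C: "subgroup C H" and D: "subgroup D H"
  shows "generate (G \<times>\<times> H) (A \<times> C \<union> B \<times> D) = generate G (A \<union> B) \<times> generate H (C \<union> D)"
proof (rule generate_DirProd_between_axes_and_box[OF assms(1,2)])
  show "A \<union> B \<subseteq> carrier G" "C \<union> D \<subseteq> carrier H"
    using A B C D subgroup.subset by blast+
  show "(A \<union> B) \<times> {\<one>\<^bsub>H\<^esub>} \<union> {\<one>\<^bsub>G\<^esub>} \<times> (C \<union> D) \<subseteq> A \<times> C \<union> B \<times> D"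
    using subgroup.one_closed[OF A] subgroup.one_closed[OF B]
      subgroup.one_closed[OF C] subgroup.one_closed[OF D] by blast
qed blast

lemma subgroup_geometry_systemD:
  assumes "subgroup_geometry_system G I K"
  shows "group G"
    and "i \<in> I \<Longrightarrow> subgroup (K i) G"
    and "\<tau> \<subseteq> I \<Longrightarrow> \<tau>' \<subseteq> I \<Longrightarrow>
      Kint G K (\<tau> \<inter> \<tau>') = generate G (Kint G K \<tau> \<union> Kint G K \<tau>')"
    and "\<tau> \<subset> I \<Longrightarrow> i \<in> I - \<tau> \<Longrightarrow>
      Kint G K \<tau> <#>\<^bsub>G\<^esub> K i = Kint G (\<lambda>j. K j <#>\<^bsub>G\<^esub> K i) \<tau>"
    and "i \<in> I \<Longrightarrow> Kint G K I \<noteq> Kint G K (I - {i})"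
  using assms unfolding subgroup_geometry_system_def by auto

theorem mainTheorem12:
  fixes G1 :: "('a, 'c) monoid_scheme" and G2 :: "('b, 'd) monoid_scheme"
    and I :: "nat set" and K1 :: "nat \<Rightarrow> 'a set" and K2 :: "nat \<Rightarrow> 'b set"
  assumes "finite I"
    and "group G1" and "group G2"
    and "\<And>i. i \<in> I \<Longrightarrow> subgroup (K1 i) G1"
    and "\<And>i. i \<in> I \<Longrightarrow> subgroup (K2 i) G2"
    and "subgroup_geometry_system G1 I K1"
    and "subgroup_geometry_system G2 I K2"
  shows "subgroup_geometry_system (G1 \<times>\<times> G2) I (\<lambda>i. K1 i \<times> K2 i)"
proof -
  note G1 = assms(2) and G2 = assms(3)
  note geom1 = subgroup_geometry_systemD[OF assms(6)] and geom2 = subgroup_geometry_systemD[OF assms(7)]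
  have sub1: "\<And>\<tau>. \<tau> \<subseteq> I \<Longrightarrow> subgroup (Kint G1 K1 \<tau>) G1"
    using subgroup_Kint[OF G1 assms(4)] .
  have sub2: "\<And>\<tau>. \<tau> \<subseteq> I \<Longrightarrow> subgroup (Kint G2 K2 \<tau>) G2"
    using subgroup_Kint[OF G2 assms(5)] .
  show ?thesis
    unfolding subgroup_geometry_system_def Kint_DirProd set_mult_DirProd
  proof (intro conjI allI impI ballI)
    show "group (G1 \<times>\<times> G2)"
      using DirProd_group[OF G1 G2] .
    show "subgroup (K1 i \<times> K2 i) (G1 \<times>\<times> G2)" if "i \<in> I" for i
      using DirProd_subgroups[OF G1 assms(4)[OF that] G2 assms(5)[OF that]] .
    show "Kint G1 K1 (\<tau> \<inter> \<tau>') \<times> Kint G2 K2 (\<tau> \<inter> \<tau>') =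
        generate (G1 \<times>\<times> G2) (Kint G1 K1 \<tau> \<times> Kint G2 K2 \<tau> \<union> Kint G1 K1 \<tau>' \<times> Kint G2 K2 \<tau>')"
      if "\<tau> \<subseteq> I" "\<tau>' \<subseteq> I" for \<tau> \<tau>'
      using that by (simp only: generate_DirProd_Un_Times G1 G2 sub1 sub2 geom1(3) geom2(3))
    show "(Kint G1 K1 \<tau> <#>\<^bsub>G1\<^esub> K1 i) \<times> (Kint G2 K2 \<tau> <#>\<^bsub>G2\<^esub> K2 i) =
        Kint G1 (\<lambda>j. K1 j <#>\<^bsub>G1\<^esub> K1 i) \<tau> \<times> Kint G2 (\<lambda>j. K2 j <#>\<^bsub>G2\<^esub> K2 i) \<tau>"
      if "\<tau> \<subset> I" "i \<in> I - \<tau>" for \<tau> i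
      using that by (simp only: geom1(4) geom2(4))
    show "Kint G1 K1 I \<times> Kint G2 K2 I \<noteq> Kint G1 K1 (I - {i}) \<times> Kint G2 K2 (I - {i})"
      if "i \<in> I" for i
      using geom1(5)[OF that] subgroup.one_closed[OF sub2[of I]]
        subgroup.one_closed[OF sub2[of "I - {i}"]] by (auto simp: times_eq_iff)
  qed
qed

end
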